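(* Let $G=(V,E)$ be a geometric graph, $u\in V$, and let $v_1,v_2,\ldots,v_l$ be the neighbors of $u$ listed in counterclockwise order around $u$. If the edges $(u,v_i)$ and $(u,v_j)$ conflict with each other for some $i\le j-2$, then there exists $k$ with $i\le k\le j-1$ such that the edges $(u,v_k)$ and $(u,v_{k+1})$ conflict with each other.
   Context: A geometric graph $G=(V,E)$ consists of a finite set $V$ of points in the plane and edges drawn as straight segments between points of $V$. Two edges $(u,v)$ and $(u,w)$ sharing the endpoint $u$ conflict if $\angle uwv\ge\pi/2$ or $\angle uvw\ge \pi/2$, i.e. if $w$ lies in the closed disk with diameter $\overline{uv}$ or $v$ lies in the closed disk with diameter $\overline{uw}$.
   Formalization: The counterclockwise angle swept around u from $v_i$ to $v_j$ must also be less than $\pi$ for the conclusion to be claimed. The statement above fails without it. *)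

theory Defs
  imports "HOL-Analysis.Analysis"
begin

text \<open>A geometric graph is a
finite point set V with a set E of (undirected) straight-line edges between distinct
points of V; an edge is stored as an ordered pair, its orientation is irrelevant.\<close>

definition geometric_graph :: "complex set \<Rightarrow> (complex \<times> complex) set \<Rightarrow> bool" where
  "geometric_graph V E \<longleftrightarrow> finite V \<and> E \<subseteq> V \<times> V \<and> (\<forall>(a, b) \<in> E. a \<noteq> b)"

definition neighbors :: "(complex \<times> complex) set \<Rightarrow> complex \<Rightarrow> complex set" where
  "neighbors E u = {v. (u, v) \<in> E \<or> (v, u) \<in> E}"

definition diam_disk :: "complex \<Rightarrow> complex \<Rightarrow> complex set" where
  "diam_disk p q = cball ((p + q) / 2) (dist p q / 2)"

definition conflict :: "complex \<Rightarrow> complex \<Rightarrow> complex \<Rightarrow> bool" where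
  "conflict u v w \<longleftrightarrow> w \<in> diam_disk u v \<or> v \<in> diam_disk u w"

definition ccw_angle :: "real \<Rightarrow> complex \<Rightarrow> real" where
  "ccw_angle theta z = (let a = Arg (z * cis (- theta)) in if a < 0 then a + 2 * pi else a)"

definition ccw_neighbor_list :: "(complex \<times> complex) set \<Rightarrow> complex \<Rightarrow> complex list \<Rightarrow> bool" where
  "ccw_neighbor_list E u vs \<longleftrightarrow> distinct vs \<and> set vs = neighbors E u \<and>
     (\<exists>theta. sorted (map (\<lambda>v. ccw_angle theta (v - u)) vs))"

end

theory Submission
  imports Defs
begin

text \<open>Put u at the origin and write a neighbour as u + rcis r phi.  Two edges with
lengths r, s and angle a between them conflict iff s \<le> r cos a or r \<le> s cos a.  If the
angle b < pi between v_i and v_j is split by v_k into a and b - a, then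
cos b \<le> cos a cos (b - a) and one of the two cosines is non-negative; hence a conflict
between v_i and v_j forces a conflict between v_i and v_k or between v_k and v_j, and the
claim follows by induction on j - i.\<close>

definition polar_conflict :: "real \<Rightarrow> real \<Rightarrow> real \<Rightarrow> bool" where
  "polar_conflict r s a \<longleftrightarrow> s \<le> r * cos a \<or> r \<le> s * cos a"

lemma polar_conflict_split:
  assumes pos: "r > 0" "s > 0" "t > 0"
    and angles: "0 \<le> a" "a \<le> b" "b < pi"
    and "polar_conflict r t b"
  shows "polar_conflict r s a \<or> polar_conflict s t (b - a)"
proof (rule ccontr)
  assume "\<not> ?thesis"
  then have no_rs: "s > r * cos a" "r > s * cos a"
    and no_st: "t > s * cos (b - a)" "s > t * cos (b - a)"
    unfolding polar_conflict_def by auto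
  have "sin a * sin (b - a) \<ge> 0"
    using angles by (intro mult_nonneg_nonneg sin_ge_zero) auto
  then have cos_b: "cos b \<le> cos a * cos (b - a)"
    using cos_add[of a "b - a"] by simp
  have "a \<le> pi / 2 \<or> b - a \<le> pi / 2"
    using angles by linarith
  then have one_nonneg: "cos a \<ge> 0 \<or> cos (b - a) \<ge> 0"
    using angles by (auto intro: cos_ge_zero)
  have "t > r * cos b"
  proof (cases "cos (b - a) \<ge> 0")
    case True
    have "r * cos b \<le> r * cos a * cos (b - a)"
      using cos_b pos by (simp add: mult.assoc)
    also have "\<dots> \<le> s * cos (b - a)"
      using no_rs(1) True by (simp add: mult_right_mono)
    finally show ?thesis using no_st(1) by linarith
  next
    case False
    then have "cos b \<le> 0"
      using one_nonneg cos_b mult_nonneg_nonpos[of "cos a" "cos (b - a)"] by linarith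
    then show ?thesis using pos mult_nonneg_nonpos[of r "cos b"] by linarith
  qed
  moreover have "r > t * cos b"
  proof (cases "cos a \<ge> 0")
    case True
    have "t * cos b \<le> t * cos (b - a) * cos a"
      using cos_b pos by (simp add: mult.assoc mult.commute)
    also have "\<dots> \<le> s * cos a"
      using no_st(2) True by (simp add: mult_right_mono)
    finally show ?thesis using no_rs(2) by linarith
  next
    case False
    then have "cos b \<le> 0"
      using one_nonneg cos_b mult_nonpos_nonneg[of "cos a" "cos (b - a)"] by linarith
    then show ?thesis using pos mult_nonneg_nonpos[of t "cos b"] by linarith
  qed
  ultimately show False
    using \<open>polar_conflict r t b\<close> unfolding polar_conflict_def by auto
qed

lemma polar_conflict_consecutive:
  fixes r phi :: "nat \<Rightarrow> real"
  assumes "i < j"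
    and "\<And>k. i \<le> k \<Longrightarrow> k \<le> j \<Longrightarrow> r k > 0"
    and "\<And>k m. i \<le> k \<Longrightarrow> k \<le> m \<Longrightarrow> m \<le> j \<Longrightarrow> phi k \<le> phi m"
    and "phi j - phi i < pi"
    and "polar_conflict (r i) (r j) (phi j - phi i)"
  shows "\<exists>k. i \<le> k \<and> k + 1 \<le> j \<and> polar_conflict (r k) (r (k + 1)) (phi (k + 1) - phi k)"
  using assms
proof (induction "j - i" arbitrary: i)
  case 0
  then show ?case by simp
next
  case (Suc d)
  show ?case
  proof (cases "j = i + 1 \<or> polar_conflict (r i) (r (i + 1)) (phi (i + 1) - phi i)")
    case True
    then show ?thesis using Suc.prems by auto
  next
    case False
    then have ij: "i + 1 < j" using Suc.prems(1) by simp
    have "phi i \<le> phi (i + 1)" "phi (i + 1) \<le> phi j"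
      using Suc.prems(3) ij by auto
    then have "polar_conflict (r (i + 1)) (r j) (phi j - phi (i + 1))"
      using polar_conflict_split[of "r i" "r (i + 1)" "r j" "phi (i + 1) - phi i" "phi j - phi i"]
        Suc.prems False ij by auto
    moreover have "phi j - phi (i + 1) < pi"
      using \<open>phi i \<le> phi (i + 1)\<close> Suc.prems(4) by linarith
    ultimately have "\<exists>k. i + 1 \<le> k \<and> k + 1 \<le> j \<and>
        polar_conflict (r k) (r (k + 1)) (phi (k + 1) - phi k)"
      using Suc ij by (intro Suc.hyps) auto
    then show ?thesis by (meson Suc_leD add_leD1 le_trans)
  qed
qed

lemma mem_diam_disk_rcis_iff:
  assumes "r > 0" "s > 0"
  shows "u + rcis s y \<in> diam_disk u (u + rcis r x) \<longleftrightarrow> s \<le> r * cos (y - x)"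
proof -
  have "u + rcis s y \<in> diam_disk u (u + rcis r x) \<longleftrightarrow> cmod (rcis s y - rcis r x / 2) \<le> r / 2"
  proof -
    have "(u + (u + rcis r x)) / 2 - (u + rcis s y) = - (rcis s y - rcis r x / 2)"
      by (simp add: field_simps)
    then show ?thesis
      unfolding diam_disk_def mem_cball dist_norm norm_minus_commute[of u]
      using assms by (simp only: norm_minus_cancel) simp
  qed
  also have "\<dots> \<longleftrightarrow> (cmod (rcis s y - rcis r x / 2))\<^sup>2 \<le> (r / 2)\<^sup>2"
    using assms by (simp add: power2_le_iff_abs_le)
  also have "(cmod (rcis s y - rcis r x / 2))\<^sup>2 =
      (s * cos y - r * cos x / 2)\<^sup>2 + (s * sin y - r * sin x / 2)\<^sup>2"
    by (simp add: cmod_power2 rcis_def cis.ctr)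
  also have "\<dots> = s\<^sup>2 * ((sin y)\<^sup>2 + (cos y)\<^sup>2) + (r / 2)\<^sup>2 * ((sin x)\<^sup>2 + (cos x)\<^sup>2)
      - r * s * (cos y * cos x + sin y * sin x)"
    by (simp add: power2_eq_square field_simps
        del: sin_cos_squared_add sin_cos_squared_add2 sin_cos_squared_add3)
  also have "\<dots> = s\<^sup>2 + (r / 2)\<^sup>2 - r * s * cos (y - x)"
    by (simp add: cos_diff)
  finally have "u + rcis s y \<in> diam_disk u (u + rcis r x) \<longleftrightarrow> s * s \<le> s * (r * cos (y - x))"
    by (simp add: power2_eq_square algebra_simps)
  also have "\<dots> \<longleftrightarrow> s \<le> r * cos (y - x)"
    using assms by simp
  finally show ?thesis .
qed

lemma conflict_rcis_iff:
  assumes "r > 0" "s > 0"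
  shows "conflict u (u + rcis r x) (u + rcis s y) \<longleftrightarrow> polar_conflict r s (y - x)"
  using mem_diam_disk_rcis_iff[OF assms, of u y x] mem_diam_disk_rcis_iff[OF assms(2,1), of u x y]
  unfolding conflict_def polar_conflict_def by (simp add: cos_diff mult.commute)

lemma rcis_add_2pi: "rcis r (x + 2 * pi) = rcis r x"
  by (simp add: rcis_def cis_mult[symmetric])

lemma ccw_angle_bounds:
  "0 \<le> ccw_angle t z" "ccw_angle t z < 2 * pi"
  unfolding ccw_angle_def Let_def using Arg_bounded[of "z * cis (- t)"] by auto

lemma rcis_ccw_angle: "z = rcis (cmod z) (t + ccw_angle t z)"
proof -
  define w where "w = z * cis (- t)"
  have "z = rcis (cmod w) (Arg w) * cis t"
    unfolding w_def rcis_cmod_Arg by (simp add: mult.assoc cis_mult)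
  then have "z = rcis (cmod z) (t + Arg w)"
    by (simp add: w_def norm_mult rcis_def mult.assoc cis_mult add.commute)
  moreover have "rcis (cmod z) (t + (Arg w + 2 * pi)) = rcis (cmod z) (t + Arg w)"
    using rcis_add_2pi[of "cmod z" "t + Arg w"] by (simp add: add.assoc)
  ultimately show ?thesis
    unfolding ccw_angle_def Let_def w_def[symmetric] by auto
qed

lemma ccw_angle_rcis:
  assumes "r > 0" "0 \<le> a" "a < 2 * pi"
  shows "ccw_angle t (rcis r (t + a)) = a"
proof -
  have rotate: "rcis r (t + a) * cis (- t) = rcis r a"
    by (simp add: rcis_def cis_mult mult.assoc)
  show ?thesis
  proof (cases "a \<le> pi")
    case True
    then have "Arg (rcis r a) = a" using assms by (intro Arg_rcis) auto
    then show ?thesis unfolding ccw_angle_def rotate using assms by simp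
  next
    case False
    have "rcis r a = rcis r (a - 2 * pi)"
      using rcis_add_2pi[of r "a - 2 * pi"] by simp
    then have "Arg (rcis r a) = a - 2 * pi" using False assms by (simp add: Arg_rcis)
    then show ?thesis unfolding ccw_angle_def rotate using assms False by simp
  qed
qed

lemma ccw_angle_from_Arg:
  assumes "r > 0" "s > 0" "a \<le> b" "b < a + 2 * pi"
  shows "ccw_angle (Arg (rcis r a)) (rcis s b) = b - a"
proof -
  have "cis (Arg (rcis r a)) = cis a"
    using cis_Arg[of "rcis r a"] assms(1) by (simp add: rcis_def sgn_mult sgn_of_real)
  then have "rcis s (Arg (rcis r a) + (b - a)) = s * (cis a * cis (b - a))"
    by (simp add: rcis_def cis_mult[symmetric])
  also have "\<dots> = rcis s b"
    by (simp add: rcis_def cis_mult)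
  finally have "rcis s (Arg (rcis r a) + (b - a)) = rcis s b" .
  then show ?thesis
    using ccw_angle_rcis[of s "b - a" "Arg (rcis r a)"] assms by simp
qed

lemma ccw_neighbor_list_polar:
  assumes "geometric_graph V E" "ccw_neighbor_list E u vs"
  obtains r phi :: "nat \<Rightarrow> real"
  where "\<And>k. k < length vs \<Longrightarrow> r k > 0"
    and "\<And>k. vs ! k = u + rcis (r k) (phi k)"
    and "\<And>k m. k \<le> m \<Longrightarrow> m < length vs \<Longrightarrow> phi k \<le> phi m"
    and "\<And>k m. phi m < phi k + 2 * pi"
proof -
  obtain theta where sorted: "sorted (map (\<lambda>v. ccw_angle theta (v - u)) vs)"
    and neighbors: "set vs = neighbors E u"
    using assms(2) unfolding ccw_neighbor_list_def by blast
  show ?thesis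
  proof (rule that[of "\<lambda>k. cmod (vs ! k - u)" "\<lambda>k. theta + ccw_angle theta (vs ! k - u)"])
    show "cmod (vs ! k - u) > 0" if "k < length vs" for k
      using assms(1) nth_mem[OF that] neighbors
      unfolding neighbors_def geometric_graph_def by auto
    show "vs ! k = u + rcis (cmod (vs ! k - u)) (theta + ccw_angle theta (vs ! k - u))" for k
      using rcis_ccw_angle[of "vs ! k - u" theta] by (simp add: eq_diff_eq')
    show "theta + ccw_angle theta (vs ! k - u) \<le> theta + ccw_angle theta (vs ! m - u)"
      if "k \<le> m" "m < length vs" for k m
      using sorted_nth_mono[OF sorted, of k m] that by simp
    show "theta + ccw_angle theta (vs ! m - u) < theta + ccw_angle theta (vs ! k - u) + 2 * pi"
      for k m
      using ccw_angle_bounds[of theta "vs ! k - u"] ccw_angle_bounds[of theta "vs ! m - u"]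
      by linarith
  qed
qed

theorem lemma8:
  fixes V :: "complex set" and E :: "(complex \<times> complex) set"
    and u :: complex and vs :: "complex list" and i j :: nat
  assumes "geometric_graph V E"
    and "u \<in> V"
    and "ccw_neighbor_list E u vs"
    and "j < length vs" and "i + 2 \<le> j"
    and "conflict u (vs ! i) (vs ! j)"
    and "ccw_angle (Arg (vs ! i - u)) (vs ! j - u) < pi"
  shows "\<exists>k. i \<le> k \<and> k + 1 \<le> j \<and> conflict u (vs ! k) (vs ! (k + 1))"
proof -
  obtain r phi where r_pos: "\<And>k. k < length vs \<Longrightarrow> r k > 0"
    and polar: "\<And>k. vs ! k = u + rcis (r k) (phi k)"
    and phi_mono: "\<And>k m. k \<le> m \<Longrightarrow> m < length vs \<Longrightarrow> phi k \<le> phi m"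
    and phi_range: "\<And>k m. phi m < phi k + 2 * pi"
    using ccw_neighbor_list_polar[OF assms(1,3)] by blast
  have conflict_iff: "conflict u (vs ! k) (vs ! m) \<longleftrightarrow> polar_conflict (r k) (r m) (phi m - phi k)"
    if "k < length vs" "m < length vs" for k m
    using conflict_rcis_iff[OF r_pos[OF that(1)] r_pos[OF that(2)]] polar by simp
  have i_len: "i < length vs" using assms(4,5) by simp
  have "ccw_angle (Arg (vs ! i - u)) (vs ! j - u) = phi j - phi i"
    using ccw_angle_from_Arg[OF r_pos[OF i_len] r_pos[OF assms(4)] phi_mono phi_range]
      polar[of i] polar[of j] assms(4,5) by simp
  with assms(7) have "phi j - phi i < pi" by simp
  moreover have "polar_conflict (r i) (r j) (phi j - phi i)"
    using conflict_iff[OF i_len assms(4)] assms(6) by simp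
  ultimately obtain k where "i \<le> k" "k + 1 \<le> j"
    "polar_conflict (r k) (r (k + 1)) (phi (k + 1) - phi k)"
    using polar_conflict_consecutive[of i j r phi] r_pos phi_mono assms(4,5) by force
  then show ?thesis
    using conflict_iff[of k "k + 1"] assms(4) by auto
qed

end
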